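(* Let $G$ be a graph with a vertex cover $X\subseteq V(G)$, $I=V(G)\setminus X$, $C\subseteq V(G)$, $\mathcal{B}=\{N_G[w]:w\in C\}$, and $k$ a positive integer. If $u,v\in I$ are distinct false twins with $N_G[u]\notin\mathcal{B}$ and $N_G[v]\notin\mathcal{B}$, then, with $G'=G-v$ and $\mathcal{B}'=\{N_{G'}[w]: w\in C\}$, we have NCTD$(\mathcal{B})\le k$ if and only if NCTD$(\mathcal{B}')\le k$.
   Context: $N_G(v)$ and $N_G[v]$ are the open and closed neighborhoods of $v$ in $G$; $u,v$ are false twins if $N(u)=N(v)$. A teaching map for $\mathcal{B}$ assigns to each $B\in\mathcal{B}$ a set $T(B)\subseteq V(G)$. A vertex $w$ distinguishes $B,B'$ if $w$ lies in exactly one of them. $T$ is non-clashing if for all distinct $B,B'\in\mathcal{B}$ some $w\in T(B)\cup T(B')$ distinguishes them; its size is $\max_{B\in\mathcal{B}}|T(B)|$. NCTD$(\mathcal{B})$ is the minimum size of a non-clashing teaching map for $\mathcal{B}$. *)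

theory Defs
  imports Main
begin

definition simple_graph :: "'a set \<Rightarrow> ('a \<Rightarrow> 'a \<Rightarrow> bool) \<Rightarrow> bool" where
  "simple_graph V E \<longleftrightarrow> finite V \<and> (\<forall>x y. E x y \<longrightarrow> x \<in> V \<and> y \<in> V)
     \<and> (\<forall>x y. E x y \<longrightarrow> E y x) \<and> (\<forall>x. \<not> E x x)"

definition vertex_cover :: "'a set \<Rightarrow> ('a \<Rightarrow> 'a \<Rightarrow> bool) \<Rightarrow> 'a set \<Rightarrow> bool" where
  "vertex_cover V E X \<longleftrightarrow> X \<subseteq> V \<and> (\<forall>x y. E x y \<longrightarrow> x \<in> X \<or> y \<in> X)"

definition open_nbh :: "'a set \<Rightarrow> ('a \<Rightarrow> 'a \<Rightarrow> bool) \<Rightarrow> 'a \<Rightarrow> 'a set" where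
  "open_nbh V E v = {w \<in> V. E v w}"

definition closed_nbh :: "'a set \<Rightarrow> ('a \<Rightarrow> 'a \<Rightarrow> bool) \<Rightarrow> 'a \<Rightarrow> 'a set" where
  "closed_nbh V E v = insert v (open_nbh V E v)"

definition del_vertex_V :: "'a set \<Rightarrow> 'a \<Rightarrow> 'a set" where
  "del_vertex_V V v = V - {v}"

definition del_vertex_E :: "('a \<Rightarrow> 'a \<Rightarrow> bool) \<Rightarrow> 'a \<Rightarrow> ('a \<Rightarrow> 'a \<Rightarrow> bool)" where
  "del_vertex_E E v = (\<lambda>x y. E x y \<and> x \<noteq> v \<and> y \<noteq> v)"

definition distinguishes :: "'a \<Rightarrow> 'a set \<Rightarrow> 'a set \<Rightarrow> bool" where
  "distinguishes w B B' \<longleftrightarrow> (w \<in> B) \<noteq> (w \<in> B')"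

definition teaching_map :: "'a set \<Rightarrow> 'a set set \<Rightarrow> ('a set \<Rightarrow> 'a set) \<Rightarrow> bool" where
  "teaching_map V \<B> T \<longleftrightarrow> (\<forall>B \<in> \<B>. T B \<subseteq> V)"

definition non_clashing :: "'a set set \<Rightarrow> ('a set \<Rightarrow> 'a set) \<Rightarrow> bool" where
  "non_clashing \<B> T \<longleftrightarrow>
     (\<forall>B \<in> \<B>. \<forall>B' \<in> \<B>. B \<noteq> B' \<longrightarrow> (\<exists>w \<in> T B \<union> T B'. distinguishes w B B'))"

text \<open>Size of T = max over B of |T B|; NCTD = least size of a non-clashing teaching map.
  "size \<le> k" is expressed as "card (T B) \<le> k for all B".\<close>
definition NCTD :: "'a set \<Rightarrow> 'a set set \<Rightarrow> nat" where
  "NCTD V \<B> = (LEAST k. \<exists>T. teaching_map V \<B> T \<and> non_clashing \<B> T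
                              \<and> (\<forall>B \<in> \<B>. card (T B) \<le> k))"

end

theory Submission
  imports Defs
begin

text \<open>Deleting the false twin v merely removes v from every set of the family, and since every set
  contains u exactly when it contains v, this loses no information. A teaching map for the original
  family is turned into one for the reduced family by replacing v by u in every teaching set; the
  converse direction just reads the reduced teaching sets as subsets of the old vertex set. Both
  directions are instances of one transfer principle along a bijection of families.\<close>

definition nc_teachable :: "'a set \<Rightarrow> 'a set set \<Rightarrow> nat \<Rightarrow> bool" where
  "nc_teachable V \<B> k \<longleftrightarrow>
     (\<exists>T. teaching_map V \<B> T \<and> non_clashing \<B> T \<and> (\<forall>B \<in> \<B>. card (T B) \<le> k))"

lemma NCTD_le_iff_nc_teachable:
  assumes "finite V" and "\<And>B. B \<in> \<B> \<Longrightarrow> B \<subseteq> V"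
  shows "NCTD V \<B> \<le> k \<longleftrightarrow> nc_teachable V \<B> k"
proof
  have "nc_teachable V \<B> (card V)"
    unfolding nc_teachable_def
    by (rule exI[of _ "\<lambda>_. V"])
      (use assms in \<open>auto simp: teaching_map_def non_clashing_def distinguishes_def\<close>)
  then have "nc_teachable V \<B> (NCTD V \<B>)"
    unfolding NCTD_def nc_teachable_def by (rule LeastI)
  moreover assume "NCTD V \<B> \<le> k"
  ultimately show "nc_teachable V \<B> k"
    unfolding nc_teachable_def by (meson le_trans)
next
  assume "nc_teachable V \<B> k"
  then show "NCTD V \<B> \<le> k"
    unfolding NCTD_def nc_teachable_def by (rule Least_le)
qed

lemma nc_teachable_transfer:
  assumes "nc_teachable V \<B> k"
    and "finite V" \<comment> \<open>otherwise card (T B) = 0 need not bound card (f ` T B)\<close>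
    and "bij_betw \<phi> \<B> \<B>'"
    and "f ` V \<subseteq> V'"
    and "\<And>B w. B \<in> \<B> \<Longrightarrow> w \<in> V \<Longrightarrow> f w \<in> \<phi> B \<longleftrightarrow> w \<in> B"
  shows "nc_teachable V' \<B>' k"
proof -
  obtain T where T_map: "teaching_map V \<B> T" and T_nc: "non_clashing \<B> T"
    and T_card: "\<forall>B \<in> \<B>. card (T B) \<le> k"
    using assms(1) unfolding nc_teachable_def by blast
  define \<psi> where "\<psi> = inv_into \<B> \<phi>"
  define T' where "T' B' = f ` T (\<psi> B')" for B'
  have \<psi>: "\<psi> B' \<in> \<B>" "\<phi> (\<psi> B') = B'" if "B' \<in> \<B>'" for B'
    using that assms(3) unfolding \<psi>_def
    by (auto intro: inv_into_into f_inv_into_f simp: bij_betw_def)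
  have T_sub: "T B \<subseteq> V" if "B \<in> \<B>" for B
    using T_map that unfolding teaching_map_def by blast
  have "teaching_map V' \<B>' T'"
    unfolding teaching_map_def T'_def using \<psi>(1) T_sub assms(4) by blast
  moreover have "card (T' B') \<le> k" if "B' \<in> \<B>'" for B'
  proof -
    have "card (T' B') \<le> card (T (\<psi> B'))"
      unfolding T'_def using T_sub[OF \<psi>(1)[OF that]] assms(2)
      by (intro card_image_le) (rule finite_subset)
    then show ?thesis using T_card \<psi>(1)[OF that] by fastforce
  qed
  moreover have "non_clashing \<B>' T'"
    unfolding non_clashing_def
  proof (intro ballI impI)
    fix B1' B2' assume B': "B1' \<in> \<B>'" "B2' \<in> \<B>'" "B1' \<noteq> B2'"
    then have "\<psi> B1' \<noteq> \<psi> B2'" using \<psi>(2) by metis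
    then obtain w where w: "w \<in> T (\<psi> B1') \<union> T (\<psi> B2')"
      and dist: "distinguishes w (\<psi> B1') (\<psi> B2')"
      using T_nc \<psi>(1)[OF B'(1)] \<psi>(1)[OF B'(2)] unfolding non_clashing_def by blast
    have "w \<in> V" using w T_sub \<psi>(1) B' by blast
    then have "distinguishes (f w) B1' B2'"
      using dist assms(5) \<psi> B' unfolding distinguishes_def by metis
    moreover have "f w \<in> T' B1' \<union> T' B2'" using w unfolding T'_def by blast
    ultimately show "\<exists>w \<in> T' B1' \<union> T' B2'. distinguishes w B1' B2'" by blast
  qed
  ultimately show ?thesis unfolding nc_teachable_def by blast
qed

lemma inj_on_Diff_twin:
  assumes "u \<noteq> v" and "\<forall>B \<in> \<B>. v \<in> B \<longleftrightarrow> u \<in> B"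
  shows "inj_on (\<lambda>B. B - {v}) \<B>"
proof (rule inj_onI)
  fix B1 B2 assume "B1 \<in> \<B>" "B2 \<in> \<B>" "B1 - {v} = B2 - {v}"
  moreover from this have "v \<in> B1 \<longleftrightarrow> v \<in> B2" using assms by blast
  ultimately show "B1 = B2" by blast
qed

lemma nc_teachable_Diff_twin_iff:
  assumes "finite V" and "u \<in> V" and "u \<noteq> v" and twin: "\<forall>B \<in> \<B>. v \<in> B \<longleftrightarrow> u \<in> B"
  shows "nc_teachable (V - {v}) ((\<lambda>B. B - {v}) ` \<B>) k \<longleftrightarrow> nc_teachable V \<B> k"
proof
  let ?\<B>' = "(\<lambda>B. B - {v}) ` \<B>"
  have inj: "inj_on (\<lambda>B. B - {v}) \<B>"
    using assms(3) twin by (rule inj_on_Diff_twin)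
  then have bij: "bij_betw (\<lambda>B. B - {v}) \<B> ?\<B>'"
    by (rule inj_on_imp_bij_betw)
  show "nc_teachable V \<B> k" if "nc_teachable (V - {v}) ?\<B>' k"
  proof (rule nc_teachable_transfer[OF that _ bij_betw_inv_into[OF bij], where f = id])
    show "id w \<in> inv_into \<B> (\<lambda>B. B - {v}) B' \<longleftrightarrow> w \<in> B'"
      if "B' \<in> ?\<B>'" and "w \<in> V - {v}" for B' w
      using that inv_into_f_f[OF inj] by auto
  qed (use assms(1) in auto)
  show "nc_teachable (V - {v}) ?\<B>' k" if "nc_teachable V \<B> k"
  proof (rule nc_teachable_transfer[OF that assms(1) bij, where f = "id(v := u)"])
    show "(id(v := u)) w \<in> B - {v} \<longleftrightarrow> w \<in> B" if "B \<in> \<B>" "w \<in> V" for B w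
      using that twin assms(3) by (cases "w = v") auto
  qed (use assms(2,3) in auto)
qed

lemma closed_nbh_subset: "v \<in> V \<Longrightarrow> closed_nbh V E v \<subseteq> V"
  unfolding closed_nbh_def open_nbh_def by blast

lemma closed_nbh_del_vertex:
  "w \<noteq> v \<Longrightarrow> closed_nbh (del_vertex_V V v) (del_vertex_E E v) w = closed_nbh V E w - {v}"
  unfolding closed_nbh_def open_nbh_def del_vertex_V_def del_vertex_E_def by auto

lemma false_twins_in_closed_nbh:
  assumes "simple_graph V E" and "open_nbh V E u = open_nbh V E v"
    and "w \<in> V" and "w \<noteq> u" and "w \<noteq> v"
  shows "v \<in> closed_nbh V E w \<longleftrightarrow> u \<in> closed_nbh V E w"
proof -
  have "E w v \<longleftrightarrow> E w u"
    using assms unfolding simple_graph_def open_nbh_def by blast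
  then show ?thesis
    using assms(1,4,5) unfolding simple_graph_def closed_nbh_def open_nbh_def by blast
qed

theorem lemma6:
  fixes V :: "'a set" and E :: "'a \<Rightarrow> 'a \<Rightarrow> bool" and X C :: "'a set"
    and u v :: 'a and k :: nat
  assumes "simple_graph V E"
    and "vertex_cover V E X"
    and "C \<subseteq> V"
    and "k > 0"
    and "u \<in> V - X" and "v \<in> V - X" and "u \<noteq> v"
    and "open_nbh V E u = open_nbh V E v"
    and "closed_nbh V E u \<notin> (closed_nbh V E) ` C"
    and "closed_nbh V E v \<notin> (closed_nbh V E) ` C"
  shows "NCTD V ((closed_nbh V E) ` C) \<le> k \<longleftrightarrow>
         NCTD (del_vertex_V V v)
              ((closed_nbh (del_vertex_V V v) (del_vertex_E E v)) ` C) \<le> k"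
proof -
  have fin: "finite V" using assms(1) unfolding simple_graph_def by blast
  have "u \<notin> C" "v \<notin> C" using assms(9,10) by blast+
  have twin: "\<forall>B \<in> closed_nbh V E ` C. v \<in> B \<longleftrightarrow> u \<in> B"
  proof
    fix B assume "B \<in> closed_nbh V E ` C"
    then obtain w where "w \<in> C" and B: "B = closed_nbh V E w" by blast
    then have w: "w \<in> V" "w \<noteq> u" "w \<noteq> v" using assms(3) \<open>u \<notin> C\<close> \<open>v \<notin> C\<close> by auto
    show "v \<in> B \<longleftrightarrow> u \<in> B"
      unfolding B using assms(1,8) w by (rule false_twins_in_closed_nbh)
  qed
  have nbh_sub: "\<And>B. B \<in> closed_nbh V E ` C \<Longrightarrow> B \<subseteq> V"
    using assms(3) by (auto intro!: closed_nbh_subset)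
  have reduced: "closed_nbh (del_vertex_V V v) (del_vertex_E E v) ` C
      = (\<lambda>B. B - {v}) ` closed_nbh V E ` C"
    unfolding image_image
    by (rule image_cong[OF refl], rule closed_nbh_del_vertex) (use \<open>v \<notin> C\<close> in blast)
  have "NCTD V (closed_nbh V E ` C) \<le> k \<longleftrightarrow> nc_teachable V (closed_nbh V E ` C) k"
    using fin nbh_sub by (rule NCTD_le_iff_nc_teachable)
  also have "\<dots> \<longleftrightarrow> nc_teachable (V - {v}) ((\<lambda>B. B - {v}) ` closed_nbh V E ` C) k"
    using nc_teachable_Diff_twin_iff[OF fin _ assms(7) twin] assms(5) by simp
  also have "\<dots> \<longleftrightarrow> NCTD (V - {v}) ((\<lambda>B. B - {v}) ` closed_nbh V E ` C) \<le> k"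
    using fin nbh_sub by (intro NCTD_le_iff_nc_teachable[symmetric]) auto
  finally show ?thesis
    unfolding reduced unfolding del_vertex_V_def .
qed

end
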